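(* Let $\mathcal{T}=(C,B,A)$ and $\mathcal{T}'=(C',B',A')$ be $m\times(n,m,m)$ triples, and define the $m\times(n+2m)$ polynomial matrices $\mathcal{T}(x,y)=[C\ \ xI_m+B\ \ yI_m+A]$ and $\mathcal{T}'(x,y)=[C'\ \ xI_m+B'\ \ yI_m+A']$ in indeterminates $x,y$. Then $\mathcal{T}$ and $\mathcal{T}'$ are feedback similar if and only if there exist nonsingular complex matrices $S\in\mathbb{C}^{m\times m}$ and $R\in\mathbb{C}^{(n+2m)\times(n+2m)}$ such that $S\,\mathcal{T}'(x,y)=\mathcal{T}(x,y)\,R$.
   Context: An $m\times(n,m,m)$ triple is $(C,B,A)$ with $C\in\mathbb{C}^{m\times n}$, $B,A\in\mathbb{C}^{m\times m}$. Two such triples are feedback similar if $[C'\ B'\ A']=S^{-1}[C\ B\ A]\begin{bmatrix}P&V&U\\0&S&0\\0&0&S\end{bmatrix}$ for some $U,V\in\mathbb{C}^{n\times m}$ and nonsingular $P\in\mathbb{C}^{n\times n}$, $S\in\mathbb{C}^{m\times m}$. *)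

theory Defs
  imports "Jordan_Normal_Form.Matrix" "HOL-Computational_Algebra.Polynomial"
begin

definition hcat :: "'a mat \<Rightarrow> 'a mat \<Rightarrow> 'a mat" where
  "hcat A B = mat (dim_row A) (dim_col A + dim_col B)
     (\<lambda>(i,j). if j < dim_col A then A $$ (i,j) else B $$ (i, j - dim_col A))"

definition is_triple :: "nat \<Rightarrow> nat \<Rightarrow> complex mat \<Rightarrow> complex mat \<Rightarrow> complex mat \<Rightarrow> bool" where
  "is_triple m n C B A \<longleftrightarrow>
     C \<in> carrier_mat m n \<and> B \<in> carrier_mat m m \<and> A \<in> carrier_mat m m"

text \<open>Feedback similarity:
  [C' B' A'] = S^{-1} [C B A] [[P,V,U],[0,S,0],[0,0,S]], written equivalently as
  S [C' B' A'] = [C B A] [[P,V,U],[0,S,0],[0,0,S]] with S nonsingular.\<close>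
definition feedback_similar ::
  "nat \<Rightarrow> nat \<Rightarrow> complex mat \<Rightarrow> complex mat \<Rightarrow> complex mat
       \<Rightarrow> complex mat \<Rightarrow> complex mat \<Rightarrow> complex mat \<Rightarrow> bool" where
  "feedback_similar m n C B A C' B' A' \<longleftrightarrow>
     (\<exists>P S U V. P \<in> carrier_mat n n \<and> invertible_mat P \<and>
        S \<in> carrier_mat m m \<and> invertible_mat S \<and>
        U \<in> carrier_mat n m \<and> V \<in> carrier_mat n m \<and>
        S * hcat C' (hcat B' A') =
          hcat C (hcat B A) *
          four_block_mat P (hcat V U)
            (0\<^sub>m (2*m) n) (four_block_mat S (0\<^sub>m m m) (0\<^sub>m m m) S))"

text \<open>Bivariate polynomials over the complex numbers are modelled as
  complex poly poly: the inner variable is x, the outer variable is y.\<close>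
definition const2 :: "complex \<Rightarrow> complex poly poly" where
  "const2 c = [:[:c:]:]"

definition X2 :: "complex poly poly" where "X2 = [:[:0, 1:]:]"
definition Y2 :: "complex poly poly" where "Y2 = [:0, 1:]"

definition triple_pmat ::
  "nat \<Rightarrow> complex mat \<Rightarrow> complex mat \<Rightarrow> complex mat \<Rightarrow> complex poly poly mat" where
  "triple_pmat m C B A =
     hcat (map_mat const2 C)
       (hcat (X2 \<cdot>\<^sub>m 1\<^sub>m m + map_mat const2 B) (Y2 \<cdot>\<^sub>m 1\<^sub>m m + map_mat const2 A))"

end

theory Submission
  imports Defs "Jordan_Normal_Form.Determinant"
begin

text \<open>Write T(x,y) = K + x E_x + y E_y with K = [C B A] and the constant selector
  matrices E_x = [0 I 0], E_y = [0 0 I]. For constant S and R, comparing the coefficients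
  of 1, x and y splits S T'(x,y) = T(x,y) R into S K' = K R, S E_x = E_x R and
  S E_y = E_y R. The last two equations say exactly that the last 2m rows of R are
  [0 S 0; 0 0 S], i.e. that R = [P V U; 0 S 0; 0 0 S]; and as det R = det P (det S)^2,
  such an R is nonsingular iff P is.\<close>

lemma hcat_index [simp]:
  "i < dim_row A \<Longrightarrow> j < dim_col A + dim_col B \<Longrightarrow>
   hcat A B $$ (i,j) = (if j < dim_col A then A $$ (i,j) else B $$ (i, j - dim_col A))"
  by (simp add: hcat_def)

lemma dim_hcat [simp]:
  "dim_row (hcat A B) = dim_row A" "dim_col (hcat A B) = dim_col A + dim_col B"
  by (simp_all add: hcat_def)

lemma hcat_carrier_mat:
  "A \<in> carrier_mat r c \<Longrightarrow> B \<in> carrier_mat r d \<Longrightarrow> hcat A B \<in> carrier_mat r (c + d)"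
  unfolding carrier_mat_def by auto

definition affine_poly2 :: "'a::zero \<Rightarrow> 'a \<Rightarrow> 'a \<Rightarrow> 'a poly poly" where
  "affine_poly2 a b c = [:[:a, b:], [:c:]:]"

lemma affine_poly2_sum:
  "(\<Sum>k\<in>K. affine_poly2 (a k) (b k) (c k)) = affine_poly2 (sum a K) (sum b K) (sum c K)"
  by (induct K rule: infinite_finite_induct) (auto simp: affine_poly2_def)

lemma smult_affine_poly2:
  "smult [:s:] (affine_poly2 a b c) = affine_poly2 (s * a) (s * b) (s * (c::'a::comm_semiring_1))"
  by (simp add: affine_poly2_def mult.commute)

lemma affine_poly2_eq_iff:
  "affine_poly2 a b c = affine_poly2 a' b' c' \<longleftrightarrow> a = a' \<and> b = b' \<and> c = c'"
  by (simp add: affine_poly2_def)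

definition affine_pmat :: "'a::zero mat \<Rightarrow> 'a mat \<Rightarrow> 'a mat \<Rightarrow> 'a poly poly mat" where
  "affine_pmat K0 K1 K2 =
     mat (dim_row K0) (dim_col K0) (\<lambda>ij. affine_poly2 (K0 $$ ij) (K1 $$ ij) (K2 $$ ij))"

lemma const_mat_mult_affine_pmat:
  fixes S :: "'a::comm_semiring_1 mat"
  assumes "S \<in> carrier_mat r r'" and "K0 \<in> carrier_mat r' c" "K1 \<in> carrier_mat r' c" "K2 \<in> carrier_mat r' c"
  shows "map_mat (\<lambda>s. [:[:s:]:]) S * affine_pmat K0 K1 K2 = affine_pmat (S * K0) (S * K1) (S * K2)"
  using assms
  by (intro eq_matI) (auto simp: affine_pmat_def scalar_prod_def smult_affine_poly2 affine_poly2_sum)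

lemma affine_pmat_mult_const_mat:
  fixes R :: "'a::comm_semiring_1 mat"
  assumes "R \<in> carrier_mat c c'" and "K0 \<in> carrier_mat r c" "K1 \<in> carrier_mat r c" "K2 \<in> carrier_mat r c"
  shows "affine_pmat K0 K1 K2 * map_mat (\<lambda>s. [:[:s:]:]) R = affine_pmat (K0 * R) (K1 * R) (K2 * R)"
  using assms
  by (intro eq_matI) (auto simp: affine_pmat_def scalar_prod_def smult_affine_poly2 affine_poly2_sum mult.commute)

lemma affine_pmat_eq_iff:
  assumes "K0 \<in> carrier_mat r c" "K1 \<in> carrier_mat r c" "K2 \<in> carrier_mat r c"
    and "L0 \<in> carrier_mat r c" "L1 \<in> carrier_mat r c" "L2 \<in> carrier_mat r c"
  shows "affine_pmat K0 K1 K2 = affine_pmat L0 L1 L2 \<longleftrightarrow> K0 = L0 \<and> K1 = L1 \<and> K2 = L2"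
proof
  assume eq: "affine_pmat K0 K1 K2 = affine_pmat L0 L1 L2"
  have "K0 $$ (i,j) = L0 $$ (i,j) \<and> K1 $$ (i,j) = L1 $$ (i,j) \<and> K2 $$ (i,j) = L2 $$ (i,j)"
    if "i < r" "j < c" for i j
    using arg_cong[OF eq, of "\<lambda>M. M $$ (i,j)"] that assms
    by (simp add: affine_pmat_def affine_poly2_eq_iff)
  then show "K0 = L0 \<and> K1 = L1 \<and> K2 = L2"
    using assms by (auto intro!: eq_matI)
qed simp

definition block_selector :: "nat \<Rightarrow> nat \<Rightarrow> nat \<Rightarrow> 'a::{zero,one} mat" where
  "block_selector m k l = hcat (0\<^sub>m m k) (hcat (1\<^sub>m m) (0\<^sub>m m l))"

lemma dim_block_selector [simp]:
  "dim_row (block_selector m k l) = m" "dim_col (block_selector m k l) = k + m + l"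
  unfolding block_selector_def by (simp_all only: dim_hcat index_zero_mat index_one_mat add.assoc)

lemma block_selector_carrier_mat: "block_selector m k l \<in> carrier_mat m (k + m + l)"
  by (intro carrier_matI) (simp_all only: dim_block_selector)

lemma row_block_selector:
  "i < m \<Longrightarrow> row (block_selector m k l) i = unit_vec (k + m + l) (k + i)"
  by (intro eq_vecI) (auto simp: block_selector_def unit_vec_def)

lemma col_block_selector:
  "j < k + m + l \<Longrightarrow>
   col (block_selector m k l) j = (if k \<le> j \<and> j < k + m then unit_vec m (j - k) else 0\<^sub>v m)"
  by (intro eq_vecI) (auto simp: block_selector_def unit_vec_def)

lemma block_selector_mult_index:
  fixes R :: "'a::semiring_1 mat"
  assumes "R \<in> carrier_mat (k + m + l) c" "i < m" "j < c"
  shows "(block_selector m k l * R) $$ (i,j) = R $$ (k + i, j)"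
  using assms block_selector_carrier_mat[of m k l]
  by (auto simp: row_block_selector scalar_prod_left_unit)

lemma mult_block_selector_index:
  fixes S :: "'a::semiring_1 mat"
  assumes "S \<in> carrier_mat r m" "i < r" "j < k + m + l"
  shows "(S * block_selector m k l) $$ (i,j) = (if k \<le> j \<and> j < k + m then S $$ (i, j - k) else 0)"
  using assms block_selector_carrier_mat[of m k l] by (auto simp: col_block_selector)

lemma triple_pmat_eq_affine_pmat:
  assumes "is_triple m n C B A"
  shows "triple_pmat m C B A =
    affine_pmat (hcat C (hcat B A)) (block_selector m n m) (block_selector m (n + m) 0)"
proof (rule eq_matI)
  fix i j
  assume "i < dim_row (affine_pmat (hcat C (hcat B A)) (block_selector m n m) (block_selector m (n + m) 0))"
    and "j < dim_col (affine_pmat (hcat C (hcat B A)) (block_selector m n m) (block_selector m (n + m) 0))"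
  with assms have "i < m" "j < n + m + m" "C \<in> carrier_mat m n" "B \<in> carrier_mat m m" "A \<in> carrier_mat m m"
    by (auto simp: affine_pmat_def is_triple_def)
  then show "triple_pmat m C B A $$ (i, j) =
    affine_pmat (hcat C (hcat B A)) (block_selector m n m) (block_selector m (n + m) 0) $$ (i, j)"
    by (auto simp: triple_pmat_def affine_pmat_def block_selector_def affine_poly2_def
        const2_def X2_def Y2_def pCons_one)
qed (use assms in \<open>auto simp: triple_pmat_def affine_pmat_def is_triple_def\<close>)

lemma commute_block_selector_iff:
  fixes S R :: "'a::semiring_1 mat"
  assumes S: "S \<in> carrier_mat m m" and R: "R \<in> carrier_mat (k + m + l) (k + m + l)"
  shows "S * block_selector m k l = block_selector m k l * R \<longleftrightarrow>
    (\<forall>i<m. \<forall>j<k + m + l. R $$ (k + i, j) = (if k \<le> j \<and> j < k + m then S $$ (i, j - k) else 0))"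
proof -
  have "S * block_selector m k l = block_selector m k l * R \<longleftrightarrow>
    (\<forall>i<m. \<forall>j<k + m + l. (S * block_selector m k l) $$ (i, j) = (block_selector m k l * R) $$ (i, j))"
    using S R by (simp add: mat_eq_iff del: index_mult_mat(1))
  then show ?thesis
    by (auto simp: mult_block_selector_index[OF S] block_selector_mult_index[OF R])
qed

definition feedback_mat :: "nat \<Rightarrow> nat \<Rightarrow> 'a::zero mat \<Rightarrow> 'a mat \<Rightarrow> 'a mat \<Rightarrow> 'a mat \<Rightarrow> 'a mat" where
  "feedback_mat m n P V U S =
     four_block_mat P (hcat V U) (0\<^sub>m (2 * m) n) (four_block_mat S (0\<^sub>m m m) (0\<^sub>m m m) S)"

lemma feedback_mat_carrier_mat:
  "P \<in> carrier_mat n n \<Longrightarrow> S \<in> carrier_mat m m \<Longrightarrow>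
   feedback_mat m n P V U S \<in> carrier_mat (n + 2 * m) (n + 2 * m)"
  unfolding feedback_mat_def mult_2
  by (intro four_block_carrier_mat) (auto simp: hcat_carrier_mat)

lemma feedback_mat_index:
  assumes "P \<in> carrier_mat n n" "S \<in> carrier_mat m m" "V \<in> carrier_mat n m" "U \<in> carrier_mat n m"
    and "i < n + 2 * m" "j < n + 2 * m"
  shows "feedback_mat m n P V U S $$ (i, j) =
    (if i < n then (if j < n then P $$ (i, j) else if j < n + m then V $$ (i, j - n) else U $$ (i, j - n - m))
     else if i < n + m then (if n \<le> j \<and> j < n + m then S $$ (i - n, j - n) else 0)
     else (if n + m \<le> j then S $$ (i - n - m, j - n - m) else 0))"
  using assms unfolding feedback_mat_def mult_2 by auto

lemma det_feedback_mat:
  fixes P S :: "'a::idom mat"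
  assumes "P \<in> carrier_mat n n" "S \<in> carrier_mat m m" "V \<in> carrier_mat n m" "U \<in> carrier_mat n m"
  shows "det (feedback_mat m n P V U S) = det P * det S ^ 2"
proof -
  have "det (four_block_mat S (0\<^sub>m m m) (0\<^sub>m m m) S) = det S ^ 2"
    by (subst det_four_block_mat_lower_left_zero) (use assms in \<open>auto simp: power2_eq_square\<close>)
  with assms show ?thesis
    unfolding feedback_mat_def
    by (subst det_four_block_mat_lower_left_zero[of P n _ "m + m"]) (auto simp: mult_2)
qed

lemma invertible_mat_iff_det:
  fixes A :: "'a::field mat"
  assumes A: "A \<in> carrier_mat k k"
  shows "invertible_mat A \<longleftrightarrow> det A \<noteq> 0"
proof
  assume "invertible_mat A"
  then obtain B where AB: "A * B = 1\<^sub>m k" and BA: "B * A = 1\<^sub>m (dim_row B)"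
    using A unfolding invertible_mat_def inverts_mat_def by auto
  then have "B \<in> carrier_mat k k"
    using A by (metis carrier_matD carrier_matI index_mult_mat(2,3) index_one_mat(2,3))
  with A AB have "det A * det B = 1"
    by (metis det_mult det_one)
  then show "det A \<noteq> 0" by auto
next
  assume "det A \<noteq> 0"
  then obtain B where "B \<in> carrier_mat k k" "A * B = 1\<^sub>m k" "B * A = 1\<^sub>m k"
    using det_non_zero_imp_unit[OF A] unfolding Units_def ring_mat_def by auto
  with A show "invertible_mat A"
    unfolding invertible_mat_def inverts_mat_def by auto
qed

lemma invertible_feedback_mat_iff:
  fixes P S :: "'a::field mat"
  assumes "P \<in> carrier_mat n n" "S \<in> carrier_mat m m" "V \<in> carrier_mat n m" "U \<in> carrier_mat n m"
    and "invertible_mat S"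
  shows "invertible_mat (feedback_mat m n P V U S) \<longleftrightarrow> invertible_mat P"
proof -
  have "feedback_mat m n P V U S \<in> carrier_mat (n + 2 * m) (n + 2 * m)"
    using assms by (simp add: feedback_mat_carrier_mat)
  with assms show ?thesis
    by (simp add: invertible_mat_iff_det det_feedback_mat)
qed

lemma ex_feedback_mat_iff:
  assumes S: "S \<in> carrier_mat m m" and R: "R \<in> carrier_mat (n + 2 * m) (n + 2 * m)"
  shows "(\<exists>P V U. P \<in> carrier_mat n n \<and> V \<in> carrier_mat n m \<and> U \<in> carrier_mat n m \<and>
           R = feedback_mat m n P V U S) \<longleftrightarrow>
    (\<forall>i<m. \<forall>j<n + 2 * m.
       R $$ (n + i, j) = (if n \<le> j \<and> j < n + m then S $$ (i, j - n) else 0) \<and>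
       R $$ (n + m + i, j) = (if n + m \<le> j then S $$ (i, j - (n + m)) else 0))"
    (is "?feedback \<longleftrightarrow> ?rows")
proof
  assume ?feedback
  then show ?rows
    using S by (auto simp: feedback_mat_index)
next
  assume rows: ?rows
  define P where "P = mat n n (\<lambda>(i, j). R $$ (i, j))"
  define V where "V = mat n m (\<lambda>(i, j). R $$ (i, n + j))"
  define U where "U = mat n m (\<lambda>(i, j). R $$ (i, n + m + j))"
  have PVU: "P \<in> carrier_mat n n" "V \<in> carrier_mat n m" "U \<in> carrier_mat n m"
    by (simp_all add: P_def V_def U_def)
  have FB: "feedback_mat m n P V U S \<in> carrier_mat (n + 2 * m) (n + 2 * m)"
    using PVU(1) S by (rule feedback_mat_carrier_mat)
  have "R = feedback_mat m n P V U S"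
  proof (rule eq_matI)
    fix i j
    assume "i < dim_row (feedback_mat m n P V U S)" "j < dim_col (feedback_mat m n P V U S)"
    then have i: "i < n + 2 * m" and j: "j < n + 2 * m"
      using FB by simp_all
    consider "i < n" | "n \<le> i" "i < n + m" | "n + m \<le> i" by linarith
    then show "R $$ (i, j) = feedback_mat m n P V U S $$ (i, j)"
    proof cases
      case 1
      then show ?thesis
        using i j PVU S by (auto simp: feedback_mat_index P_def V_def U_def)
    next
      case 2
      then show ?thesis
        using i j PVU S rows[rule_format, of "i - n" j] by (simp add: feedback_mat_index)
    next
      case 3
      then show ?thesis
        using i j PVU S rows[rule_format, of "i - n - m" j] by (simp add: feedback_mat_index)
    qed
  qed (use R FB in simp_all)
  with PVU show ?feedback by blast
qed

lemma commute_block_selectors_iff_feedback_mat: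
  fixes S R :: "'a::semiring_1 mat"
  assumes S: "S \<in> carrier_mat m m" and R: "R \<in> carrier_mat (n + 2 * m) (n + 2 * m)"
  shows "S * block_selector m n m = block_selector m n m * R \<and>
         S * block_selector m (n + m) 0 = block_selector m (n + m) 0 * R \<longleftrightarrow>
    (\<exists>P V U. P \<in> carrier_mat n n \<and> V \<in> carrier_mat n m \<and> U \<in> carrier_mat n m \<and>
       R = feedback_mat m n P V U S)"
proof -
  have "R \<in> carrier_mat (n + m + m) (n + m + m)" "R \<in> carrier_mat (n + m + m + 0) (n + m + m + 0)"
    using R by (simp_all add: mult_2 add.assoc)
  from commute_block_selector_iff[OF S this(1)] commute_block_selector_iff[OF S this(2)]
  show ?thesis
    unfolding ex_feedback_mat_iff[OF S R] by (auto simp: mult_2 add.assoc)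
qed

lemma triple_pmat_similar_iff:
  assumes T: "is_triple m n C B A" and T': "is_triple m n C' B' A'"
    and S: "S \<in> carrier_mat m m" and R: "R \<in> carrier_mat (n + 2 * m) (n + 2 * m)"
  shows "map_mat const2 S * triple_pmat m C' B' A' = triple_pmat m C B A * map_mat const2 R \<longleftrightarrow>
    S * hcat C' (hcat B' A') = hcat C (hcat B A) * R \<and>
    S * block_selector m n m = block_selector m n m * R \<and>
    S * block_selector m (n + m) 0 = block_selector m (n + m) 0 * R"
proof -
  have K: "hcat C (hcat B A) \<in> carrier_mat m (n + m + m)"
    and K': "hcat C' (hcat B' A') \<in> carrier_mat m (n + m + m)"
    using T T' unfolding is_triple_def by (auto simp: hcat_carrier_mat)
  have dims: "dim_col C' = n" "dim_col B' = m" "dim_col A' = m"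
    using T' unfolding is_triple_def by auto
  have E: "block_selector m n m \<in> carrier_mat m (n + m + m)"
    and E': "block_selector m (n + m) 0 \<in> carrier_mat m (n + m + m)"
    using block_selector_carrier_mat[of m n m] block_selector_carrier_mat[of m "n + m" 0] by simp_all
  have R': "R \<in> carrier_mat (n + m + m) (n + m + m)"
    using R by (simp add: mult_2 add.assoc)
  show ?thesis
    unfolding triple_pmat_eq_affine_pmat[OF T] triple_pmat_eq_affine_pmat[OF T'] const2_def[abs_def]
      const_mat_mult_affine_pmat[OF S K' E E'] affine_pmat_mult_const_mat[OF R' K E E']
    using S R' K K' E E' by (intro affine_pmat_eq_iff) (auto simp: dims add.assoc)
qed

theorem lemma12:
  fixes m n :: nat and C B A C' B' A' :: "complex mat"
  assumes "is_triple m n C B A" and "is_triple m n C' B' A'"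
  shows "feedback_similar m n C B A C' B' A' \<longleftrightarrow>
    (\<exists>S R. S \<in> carrier_mat m m \<and> invertible_mat S \<and>
       R \<in> carrier_mat (n + 2*m) (n + 2*m) \<and> invertible_mat R \<and>
       map_mat const2 S * triple_pmat m C' B' A' = triple_pmat m C B A * map_mat const2 R)"
    (is "_ \<longleftrightarrow> (\<exists>S R. ?similar S R)")
proof
  assume "feedback_similar m n C B A C' B' A'"
  then obtain P S U V where P: "P \<in> carrier_mat n n" "invertible_mat P"
    and S: "S \<in> carrier_mat m m" "invertible_mat S" and UV: "U \<in> carrier_mat n m" "V \<in> carrier_mat n m"
    and eq: "S * hcat C' (hcat B' A') = hcat C (hcat B A) * feedback_mat m n P V U S"
    unfolding feedback_similar_def feedback_mat_def by blast
  define R where "R = feedback_mat m n P V U S"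
  have R: "R \<in> carrier_mat (n + 2 * m) (n + 2 * m)" "invertible_mat R"
    using P S UV by (simp_all add: R_def feedback_mat_carrier_mat invertible_feedback_mat_iff)
  have "S * block_selector m n m = block_selector m n m * R \<and>
        S * block_selector m (n + m) 0 = block_selector m (n + m) 0 * R"
    using commute_block_selectors_iff_feedback_mat[OF S(1) R(1)] P UV R_def by blast
  with eq have "?similar S R"
    using triple_pmat_similar_iff[OF assms S(1) R(1)] S R by (simp add: R_def)
  then show "\<exists>S R. ?similar S R" by blast
next
  assume "\<exists>S R. ?similar S R"
  then obtain S R where S: "S \<in> carrier_mat m m" "invertible_mat S"
    and R: "R \<in> carrier_mat (n + 2 * m) (n + 2 * m)" "invertible_mat R"
    and eq: "map_mat const2 S * triple_pmat m C' B' A' = triple_pmat m C B A * map_mat const2 R"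
    by blast
  from eq obtain P V U where PVU: "P \<in> carrier_mat n n" "V \<in> carrier_mat n m" "U \<in> carrier_mat n m"
    and R_eq: "R = feedback_mat m n P V U S"
    and coeff: "S * hcat C' (hcat B' A') = hcat C (hcat B A) * R"
    using triple_pmat_similar_iff[OF assms S(1) R(1)] commute_block_selectors_iff_feedback_mat[OF S(1) R(1)]
    by blast
  have "invertible_mat P"
    using R(2) invertible_feedback_mat_iff[OF PVU(1) S(1) PVU(2,3) S(2)] by (simp add: R_eq)
  with PVU S coeff show "feedback_similar m n C B A C' B' A'"
    unfolding feedback_similar_def R_eq feedback_mat_def by blast
qed

end
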